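(* There is no Belyi map $\mathbb{P}^1\to\mathbb{P}^1$ with passport $[5\,3/2^4/2^4]$, and there is no Belyi map $\mathbb{P}^1\to\mathbb{P}^1$ with passport $[5\,4\,3/2^6/2^4\,4]$.
   Context: A Belyi map on a compact Riemann surface $X$ is a nonconstant meromorphic function $f:X\to\mathbb{P}^1$ unramified outside $\{0,1,\infty\}$. Its passport $[a_1^{p_1}\cdots/b_1^{q_1}\cdots/c_1^{r_1}\cdots]$ lists the ramification indices of the points in $f^{-1}(0)$, $f^{-1}(1)$, $f^{-1}(\infty)$ respectively, with exponents denoting repetition (so e.g. $[5\,3/2^4/2^4]$ means degree 8, fiber over $0$ consisting of points of ramification indices 5 and 3, and fibers over $1$ and $\infty$ each consisting of four points of ramification index 2). *)

theory Defs
  imports "HOL-Computational_Algebra.Computational_Algebra" "HOL-Library.Multiset"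
begin

text \<open>A meromorphic function on the Riemann sphere P^1 is a rational function p/q,
  with p, q coprime complex polynomials, q nonzero. Its degree is max(deg p, deg q).\<close>

definition rat_deg :: "complex poly \<Rightarrow> complex poly \<Rightarrow> nat" where
  "rat_deg p q = max (degree p) (degree q)"

definition rat_fun :: "complex poly \<Rightarrow> complex poly \<Rightarrow> bool" where
  "rat_fun p q \<longleftrightarrow> q \<noteq> 0 \<and> coprime p q"

definition nonconstant_rat_fun :: "complex poly \<Rightarrow> complex poly \<Rightarrow> bool" where
  "nonconstant_rat_fun p q \<longleftrightarrow> rat_fun p q \<and> rat_deg p q \<ge> 1"

text \<open>Multiset of ramification indices of the points of the fiber over a finite value c:
  finite points z with p(z) = c q(z), counted with index order z (p - c q), plus the point
  at infinity if it lies in the fiber, with index d - deg(p - c q).\<close>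

definition fiber_ram :: "complex poly \<Rightarrow> complex poly \<Rightarrow> complex \<Rightarrow> nat multiset" where
  "fiber_ram p q c =
     (let r = p - smult c q; d = rat_deg p q in
      image_mset (\<lambda>z. order z r) (mset_set {z. poly r z = 0})
      + (if degree r < d then {# d - degree r #} else {#}))"

definition fiber_ram_inf :: "complex poly \<Rightarrow> complex poly \<Rightarrow> nat multiset" where
  "fiber_ram_inf p q =
     (let d = rat_deg p q in
      image_mset (\<lambda>z. order z q) (mset_set {z. poly q z = 0})
      + (if degree q < d then {# d - degree q #} else {#}))"

definition belyi_P1 :: "complex poly \<Rightarrow> complex poly \<Rightarrow> bool" where
  "belyi_P1 p q \<longleftrightarrow> nonconstant_rat_fun p q \<and>
     (\<forall>c. c \<noteq> 0 \<and> c \<noteq> 1 \<longrightarrow> set_mset (fiber_ram p q c) \<subseteq> {1})"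

definition has_passport ::
  "complex poly \<Rightarrow> complex poly \<Rightarrow> nat multiset \<Rightarrow> nat multiset \<Rightarrow> nat multiset \<Rightarrow> bool" where
  "has_passport p q A B C \<longleftrightarrow>
     fiber_ram p q 0 = A \<and> fiber_ram p q 1 = B \<and> fiber_ram_inf p q = C"

end

theory Submission imports Defs begin

text \<open>Write f = p/q of degree d = 2m. If every ramification index over 1 and over \<infinity> is even,
  then p - q = c R^2 and q = c' Q^2 with deg R, deg Q \<le> m, so
  p = c R^2 + c' Q^2 = c (R + w Q)(R - w Q) with w^2 = -c'/c. One of the two factors has
  degree exactly m, and the factors have no common root because p and q are coprime. Hence
  the zeros of that factor form part of the fibre over 0 whose ramification indices add up
  to m. In both passports the degree is 2m with m = 4 resp. 6, but no sub-multiset of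
  {5, 3} sums to 4 and none of {5, 4, 3} sums to 6.\<close>

lemma subseteq_add_mset_cases:
  assumes "N \<subseteq># add_mset a M"
  obtains "N \<subseteq># M" | N' where "N = add_mset a N'" "N' \<subseteq># M"
proof (cases "a \<in># N")
  case True
  then obtain N' where "N = add_mset a N'" by (metis mset_add)
  with assms that(2) show ?thesis by auto
next
  case False
  with assms have "N \<subseteq># M" by (metis Diff_eq_empty_iff_mset minus_add_mset_if_not_in_lhs)
  with that(1) show ?thesis .
qed

lemma sum_order_roots_complex:
  fixes p :: "complex poly"
  assumes "p \<noteq> 0"
  shows "(\<Sum>z | poly p z = 0. order z p) = degree p"
proof -
  have "(\<Sum>z | poly p z = 0. order z p) = sum (count (proots p)) (set_mset (proots p))"
    using assms by simp
  also have "\<dots> = size (proots p)" by (simp add: size_multiset_overloaded_eq)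
  finally show ?thesis by (simp add: size_proots_complex)
qed

lemma complex_poly_eq_smult_square:
  fixes p :: "complex poly"
  assumes "\<And>z. poly p z = 0 \<Longrightarrow> even (order z p)"
  obtains R where "p = smult (lead_coeff p) (R^2)"
proof -
  define R where "R = (\<Prod>z | poly p z = 0. [:-z, 1:] ^ (order z p div 2))"
  have "R^2 = (\<Prod>z | poly p z = 0. ([:-z, 1:] ^ (order z p div 2))^2)"
    unfolding R_def by (simp add: prod_power_distrib)
  also have "\<dots> = (\<Prod>z | poly p z = 0. [:-z, 1:] ^ order z p)"
    using assms by (intro prod.cong) (auto simp: power_mult[symmetric])
  finally show ?thesis using complex_poly_decompose[of p] by (intro that[of R]) simp
qed

lemma max_degree_diff:
  fixes p q :: "'a::ab_group_add poly"
  shows "max (degree (p - q)) (degree q) = max (degree p) (degree q)"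
proof (rule antisym)
  show "max (degree (p - q)) (degree q) \<le> max (degree p) (degree q)"
    using degree_diff_le_max[of p q] by simp
  have "degree p \<le> max (degree (p - q)) (degree q)"
    using degree_add_le_max[of "p - q" q] by simp
  then show "max (degree p) (degree q) \<le> max (degree (p - q)) (degree q)" by simp
qed

lemma max_degree_add_diff_smult:
  fixes R Q :: "'a::field_char_0 poly"
  assumes "w \<noteq> 0"
  shows "max (degree (R + smult w Q)) (degree (R - smult w Q)) = max (degree R) (degree Q)"
    (is "max (degree ?U) (degree ?V) = _")
proof (rule antisym)
  show "max (degree ?U) (degree ?V) \<le> max (degree R) (degree Q)"
    using degree_add_le[of R _ "smult w Q"] degree_diff_le[of R _ "smult w Q"]
      degree_smult_le[of w Q] by fastforce
  have "R = smult (1/2) (?U + ?V)" "Q = smult (1 / (2 * w)) (?U - ?V)"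
    using assms by (auto intro!: poly_eqI simp only: coeff_add coeff_diff coeff_smult)
      (simp_all add: field_simps)
  then have "degree R \<le> degree (?U + ?V)" "degree Q \<le> degree (?U - ?V)"
    by (metis degree_smult_le)+
  then show "max (degree R) (degree Q) \<le> max (degree ?U) (degree ?V)"
    using degree_add_le_max[of ?U ?V] degree_diff_le_max[of ?U ?V] by simp
qed

lemma sum_of_squares_factor:
  fixes R Q :: "complex poly"
  assumes "c \<noteq> 0" "c' \<noteq> 0"
  obtains W W' where "smult c (R^2) + smult c' (Q^2) = smult c (W * W')"
    and "degree W = max (degree R) (degree Q)"
    and "\<And>z. poly W z = 0 \<Longrightarrow> poly W' z = 0 \<Longrightarrow> poly R z = 0 \<and> poly Q z = 0"
proof -
  define w where "w = csqrt (- c' / c)"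
  have w0: "w \<noteq> 0" and cw: "c' = - (c * w^2)"
    using assms by (auto simp: w_def)
  define U where "U = R + smult w Q"
  define V where "V = R - smult w Q"
  have fact: "smult c (R^2) + smult c' (Q^2) = smult c (U * V)"
    by (rule poly_eq_poly_eq_iff[THEN iffD1], rule ext)
      (simp add: U_def V_def cw algebra_simps power2_eq_square)
  have common: "poly R z = 0 \<and> poly Q z = 0" if "poly U z = 0" "poly V z = 0" for z
    using that w0 by (auto simp: U_def V_def)
  have "max (degree U) (degree V) = max (degree R) (degree Q)"
    unfolding U_def V_def using w0 by (rule max_degree_add_diff_smult)
  then consider "degree U = max (degree R) (degree Q)" | "degree V = max (degree R) (degree Q)"
    by linarith
  then show ?thesis
  proof cases
    case 1
    with fact common show ?thesis by (intro that[of U V])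
  next
    case 2
    with fact common show ?thesis by (intro that[of V U]) (auto simp: mult.commute)
  qed
qed

lemma sum_order_roots_of_factor:
  fixes W W' :: "complex poly"
  assumes "W * W' \<noteq> 0" "\<And>z. poly W z = 0 \<Longrightarrow> poly W' z \<noteq> 0"
  shows "(\<Sum>z | poly W z = 0. order z (W * W')) = degree W"
proof -
  have "order z (W * W') = order z W" if "poly W z = 0" for z
    using assms order_0I[of W' z] that by (simp add: order_mult)
  then have "(\<Sum>z | poly W z = 0. order z (W * W')) = (\<Sum>z | poly W z = 0. order z W)"
    by (intro sum.cong) auto
  also have "\<dots> = degree W" using assms(1) by (simp add: sum_order_roots_complex)
  finally show ?thesis .
qed

lemma nonconstant_rat_fun_fiber_poly_nonzero:
  assumes "nonconstant_rat_fun p q"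
  shows "p - smult c q \<noteq> 0"
proof
  assume "p - smult c q = 0"
  then have p: "p = smult c q" by simp
  have q0: "q \<noteq> 0" and "coprime p q"
    using assms by (auto simp: nonconstant_rat_fun_def rat_fun_def)
  then have "is_unit q" using coprime_common_divisor[of p q q] p by (simp add: dvd_smult)
  then have "degree q = 0" using q0 is_unit_iff_degree by blast
  then have "rat_deg p q = 0" using p degree_smult_le[of c q] by (simp add: rat_deg_def)
  with assms show False by (simp add: nonconstant_rat_fun_def)
qed

lemma orders_at_roots_subseteq_fiber_ram:
  assumes "p - smult c q \<noteq> 0" "A \<subseteq> {z. poly (p - smult c q) z = 0}"
  shows "image_mset (\<lambda>z. order z (p - smult c q)) (mset_set A) \<subseteq># fiber_ram p q c"
proof -
  have "image_mset (\<lambda>z. order z (p - smult c q)) (mset_set A)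
      \<subseteq># image_mset (\<lambda>z. order z (p - smult c q)) (mset_set {z. poly (p - smult c q) z = 0})"
    using assms by (intro image_mset_subseteq_mono subset_imp_msubset_mset_set poly_roots_finite)
  then show ?thesis unfolding fiber_ram_def Let_def by (simp add: subset_mset.add_increasing2)
qed

lemma order_in_fiber_ram:
  assumes "p - smult c q \<noteq> 0" "poly (p - smult c q) z = 0"
  shows "order z (p - smult c q) \<in># fiber_ram p q c"
  using orders_at_roots_subseteq_fiber_ram[of p c q "{z}"] assms by (simp add: mset_subset_eq_single)

lemma order_in_fiber_ram_inf:
  assumes "q \<noteq> 0" "poly q z = 0"
  shows "order z q \<in># fiber_ram_inf p q"
  using assms poly_roots_finite[OF assms(1)] unfolding fiber_ram_inf_def Let_def by auto

lemma sum_mset_fiber_ram: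
  assumes "p - smult c q \<noteq> 0"
  shows "sum_mset (fiber_ram p q c) = rat_deg p q"
proof -
  have "degree (p - smult c q) \<le> rat_deg p q"
    using degree_diff_le_max[of p "smult c q"] degree_smult_le[of c q] by (auto simp: rat_deg_def)
  then show ?thesis
    using sum_order_roots_complex[OF assms]
    unfolding fiber_ram_def Let_def by (simp add: sum_unfold_sum_mset)
qed

lemma fiber_ram_zero_factor_submultiset:
  assumes p: "p = smult c (W * W')" and "c \<noteq> 0" "p \<noteq> 0"
    and coprime: "\<And>z. poly W z = 0 \<Longrightarrow> poly W' z \<noteq> 0"
  obtains N where "N \<subseteq># fiber_ram p q 0" "sum_mset N = degree W"
proof
  define N where "N = image_mset (\<lambda>z. order z p) (mset_set {z. poly W z = 0})"
  show "N \<subseteq># fiber_ram p q 0"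
    using orders_at_roots_subseteq_fiber_ram[of p 0 q "{z. poly W z = 0}"] assms
    unfolding N_def by auto
  have "W * W' \<noteq> 0" using assms by auto
  then have "(\<Sum>z | poly W z = 0. order z (W * W')) = degree W"
    using sum_order_roots_of_factor coprime by simp
  then show "sum_mset N = degree W"
    using assms by (simp add: N_def sum_unfold_sum_mset order_smult)
qed

lemma fiber_ram_zero_half_degree_submultiset:
  assumes f: "nonconstant_rat_fun p q" and deg: "rat_deg p q = 2 * m"
    and even1: "\<forall>k\<in>#fiber_ram p q 1. even k" and even_inf: "\<forall>k\<in>#fiber_ram_inf p q. even k"
  obtains N where "N \<subseteq># fiber_ram p q 0" "sum_mset N = m"
proof -
  have q0: "q \<noteq> 0" and cop: "coprime p q"
    using f by (auto simp: nonconstant_rat_fun_def rat_fun_def)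
  have p0: "p \<noteq> 0" and pq0: "p - q \<noteq> 0"
    using nonconstant_rat_fun_fiber_poly_nonzero[OF f, of 0] nonconstant_rat_fun_fiber_poly_nonzero[OF f, of 1]
    by simp_all
  define c where "c = lead_coeff (p - q)"
  define c' where "c' = lead_coeff q"
  have c0: "c \<noteq> 0" "c' \<noteq> 0" using pq0 q0 unfolding c_def c'_def by (metis leading_coeff_0_iff)+
  obtain R where R: "p - q = smult c (R^2)"
    using complex_poly_eq_smult_square[of "p - q"] order_in_fiber_ram[of p 1 q] pq0 even1
    unfolding c_def by auto
  obtain Q where Q: "q = smult c' (Q^2)"
    using complex_poly_eq_smult_square[of q] order_in_fiber_ram_inf[OF q0] even_inf
    unfolding c'_def by auto
  have "degree (smult a (P^2)) = 2 * degree P" if "a \<noteq> 0" for a and P :: "complex poly"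
    using that by (cases "P = 0") (simp_all add: degree_power_eq)
  then have "2 * max (degree R) (degree Q) = max (degree (p - q)) (degree q)"
    using R Q c0 by simp
  then have degRQ: "max (degree R) (degree Q) = m"
    using deg by (simp add: max_degree_diff rat_deg_def)
  obtain W W' where "smult c (R^2) + smult c' (Q^2) = smult c (W * W')"
    and "degree W = max (degree R) (degree Q)"
    and common: "\<And>z. poly W z = 0 \<Longrightarrow> poly W' z = 0 \<Longrightarrow> poly R z = 0 \<and> poly Q z = 0"
    using sum_of_squares_factor[OF c0, of R Q] by blast
  moreover have "p = smult c (R^2) + smult c' (Q^2)" using R Q by (simp add: diff_eq_eq)
  ultimately have W: "p = smult c (W * W')" "degree W = m" using degRQ by simp_all
  have coprime_WW': "poly W' z \<noteq> 0" if "poly W z = 0" for z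
  proof
    assume "poly W' z = 0"
    with common that have "poly R z = 0" "poly Q z = 0" by auto
    then have "poly q z = 0" by (subst Q) simp
    moreover have "poly (p - q) z = 0" using \<open>poly R z = 0\<close> by (subst R) simp
    ultimately show False using coprime_poly_0[OF cop] by simp
  qed
  show ?thesis
    using fiber_ram_zero_factor_submultiset[OF W(1) c0(1) p0 coprime_WW', of q] W(2) that by metis
qed

lemma belyi_passport_half_degree_submultiset:
  assumes "belyi_P1 p q" "has_passport p q A B C"
    and "\<forall>k\<in>#B. even k" "\<forall>k\<in>#C. even k" "sum_mset B = 2 * m"
  obtains N where "N \<subseteq># A" "sum_mset N = m"
proof -
  have f: "nonconstant_rat_fun p q" using assms(1) by (simp add: belyi_P1_def)
  have fibers: "fiber_ram p q 0 = A" "fiber_ram p q 1 = B" "fiber_ram_inf p q = C"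
    using assms(2) by (simp_all add: has_passport_def)
  have "rat_deg p q = 2 * m"
    using sum_mset_fiber_ram[OF nonconstant_rat_fun_fiber_poly_nonzero[OF f, of 1]] fibers assms(5)
    by simp
  then show ?thesis
    using fiber_ram_zero_half_degree_submultiset[OF f] fibers assms(3,4) that by metis
qed

theorem mainTheorem12:
  shows "\<not> (\<exists>p q. belyi_P1 p q \<and>
            has_passport p q {#5, 3#} (replicate_mset 4 2) (replicate_mset 4 2))
       \<and> \<not> (\<exists>p q. belyi_P1 p q \<and>
            has_passport p q {#5, 4, 3#} (replicate_mset 6 2) (add_mset 4 (replicate_mset 4 2)))"
proof (intro conjI notI; elim exE conjE)
  fix p q
  assume "belyi_P1 p q" "has_passport p q {#5, 3#} (replicate_mset 4 2) (replicate_mset 4 2)"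
  then obtain N :: "nat multiset" where "N \<subseteq># {#5, 3#}" "sum_mset N = 4"
    by (rule belyi_passport_half_degree_submultiset[where m = 4]) simp_all
  then show False by (elim subseteq_add_mset_cases; simp)+
next
  fix p q
  assume "belyi_P1 p q"
    "has_passport p q {#5, 4, 3#} (replicate_mset 6 2) (add_mset 4 (replicate_mset 4 2))"
  then obtain N :: "nat multiset" where "N \<subseteq># {#5, 4, 3#}" "sum_mset N = 6"
    by (rule belyi_passport_half_degree_submultiset[where m = 6]) simp_all
  then show False by (elim subseteq_add_mset_cases; simp)+
qed

end
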